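(* Let $p, n_s, q$ be positive integers, and let $\mathbf{Y} \in \mathbb{R}^{p \times q}$, $\mathbf{Z} \in \mathbb{R}^{n_s \times q}$. Suppose the pair $(\mathbf{B}, \mathbf{D})$ with $\mathbf{B} \in \mathbb{R}^{p \times n_s}$, $\mathbf{D} \in \mathbb{R}^{p \times p}$ satisfies $$(\mathbf{I} - \mathbf{D})\mathbf{Y} = \mathbf{B}\mathbf{Z}, \qquad (\mathbf{B}~\mathbf{D})\mathbf{1} = \mathbf{1}, \qquad \mathbf{B} \geq \mathbf{0},~ \mathbf{D} \geq \mathbf{0}$$ (such a pair exists when $\mathbf{Y},\mathbf{Z}$ are noiseless steady-state data generated by a true pair $(\overline{\mathbf B},\overline{\mathbf D})$, namely that pair itself). Let $\boldsymbol{\Lambda} \in \mathbb{R}^{p\times p}$ be any non-negative diagonal matrix, and define $(\mathbf{B}', \mathbf{D}')$ by $$\mathbf{B}' = \boldsymbol{\Lambda}\mathbf{B}, \qquad \mathrm{off}(\mathbf{D}') = \boldsymbol{\Lambda}\,\mathrm{off}(\mathbf{D}), \qquad \mathrm{diag}(\mathbf{D}') = \mathbf{1} - \boldsymbol{\Lambda}\big(\mathbf{B}\mathbf{1} + \mathrm{off}(\mathbf{D})\mathbf{1}\big),$$ and assume $\boldsymbol{\Lambda}$ is such that $\mathrm{diag}(\mathbf{D}') \geq \mathbf{0}$. Then $(\mathbf{B}', \mathbf{D}')$ also satisfies $(\mathbf{I} - \mathbf{D}')\mathbf{Y} = \mathbf{B}'\mathbf{Z}$, $(\mathbf{B}'~\mathbf{D}')\mathbf{1}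 = \mathbf{1}$, $\mathbf{B}' \geq \mathbf{0}$, $\mathbf{D}' \geq \mathbf{0}$.
   Context: $\mathbf{1}$ denotes the all-ones vector of appropriate dimension; inequalities between matrices are entrywise. For a square matrix $\mathbf{D}$, $\mathrm{off}(\mathbf{D})$ denotes the square matrix obtained from $\mathbf{D}$ by setting its diagonal entries to zero, and $\mathrm{diag}(\mathbf{D})$ denotes the vector of its diagonal entries. $(\mathbf{B}~\mathbf{D})$ denotes the horizontal concatenation of $\mathbf{B}$ and $\mathbf{D}$. *)

theory Defs
  imports "HOL-Analysis.Analysis"
begin

definition off :: "real^'n^'n \<Rightarrow> real^'n^'n" where
  "off D = (\<chi> i j. if i = j then 0 else D $ i $ j)"

definition diagv :: "real^'n^'n \<Rightarrow> real^'n" where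
  "diagv D = (\<chi> i. D $ i $ i)"

text \<open>(B D) 1, the horizontal concatenation applied to the all-ones vector.\<close>
definition hcat_ones :: "real^'s^'p \<Rightarrow> real^'p^'p \<Rightarrow> real^'p" where
  "hcat_ones B D = B *v (1::real^'s) + D *v (1::real^'p)"

definition nonneg_mat :: "real^'n^'m \<Rightarrow> bool" where
  "nonneg_mat A \<longleftrightarrow> (\<forall>i j. 0 \<le> A $ i $ j)"

definition nonneg_vec :: "real^'n \<Rightarrow> bool" where
  "nonneg_vec v \<longleftrightarrow> (\<forall>i. 0 \<le> v $ i)"

end

theory Submission
  imports Defs
begin

text \<open>The rescaled pair is characterised by the single identity
  \<open>I - D' = \<Lambda> (I - D)\<close>: off the diagonal this is the definition of \<open>off D'\<close>, and on the
  diagonal it is the definition of \<open>diag D'\<close> combined with the row-sum condition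
  \<open>B 1 + off D 1 = 1 - diag D\<close>. Left-multiplying the data equation by \<open>\<Lambda>\<close> then gives the
  new data equation, the row sums of \<open>(B' D')\<close> differ from \<open>1\<close> by \<open>\<Lambda>\<close> times those of
  \<open>(B D)\<close> minus \<open>1\<close>, and nonnegativity holds entrywise.\<close>

lemma diagonal_matrix_mult_nth:
  fixes Lam :: "real^'p^'p" and A :: "real^'n^'p"
  assumes "\<forall>i j. i \<noteq> j \<longrightarrow> Lam $ i $ j = 0"
  shows "(Lam ** A) $ i $ j = Lam $ i $ i * A $ i $ j"
proof -
  have "(\<Sum>k\<in>UNIV. Lam $ i $ k * A $ k $ j)
      = (\<Sum>k\<in>UNIV. if k = i then Lam $ i $ i * A $ i $ j else 0)"
    using assms by (intro sum.cong) auto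
  then show ?thesis by (simp add: matrix_matrix_mult_def)
qed

lemma diagonal_matrix_vector_mult_nth:
  fixes Lam :: "real^'p^'p"
  assumes "\<forall>i j. i \<noteq> j \<longrightarrow> Lam $ i $ j = 0"
  shows "(Lam *v v) $ i = Lam $ i $ i * v $ i"
proof -
  have "(\<Sum>k\<in>UNIV. Lam $ i $ k * v $ k)
      = (\<Sum>k\<in>UNIV. if k = i then Lam $ i $ i * v $ i else 0)"
    using assms by (intro sum.cong) auto
  then show ?thesis by (simp add: matrix_vector_mult_def)
qed

lemma off_mulv_one_nth: "(off D *v 1) $ i = (D *v 1) $ i - D $ i $ i"
proof -
  have "(D *v 1) $ i = (\<Sum>k\<in>UNIV. if i = k then 0 else D $ i $ k) + D $ i $ i"
    by (simp add: matrix_vector_mult_def sum.If_cases Compl_eq_Diff_UNIV[symmetric]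
        Collect_neg_eq[symmetric] sum.remove[of UNIV i])
  then show ?thesis
    by (simp add: matrix_vector_mult_def off_def)
qed

lemma hcat_ones_rescaled:
  fixes Lam D :: "real^'p^'p" and B :: "real^'s^'p"
  shows "hcat_ones (Lam ** B) (mat 1 - Lam ** (mat 1 - D)) = 1 + Lam *v (hcat_ones B D - 1)"
  by (simp add: hcat_ones_def matrix_vector_mul_assoc[symmetric]
      matrix_vector_mult_diff_rdistrib matrix_vector_mult_diff_distrib
      matrix_vector_right_distrib)

lemma rescaled_D_eq_mat_one_minus:
  fixes B :: "real^'s^'p" and D Lam D' :: "real^'p^'p"
  assumes row: "hcat_ones B D = 1"
    and Lam_diag: "\<forall>i j. i \<noteq> j \<longrightarrow> Lam $ i $ j = 0"
    and D'_off: "off D' = Lam ** off D"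
    and D'_diag: "diagv D' = 1 - Lam *v (B *v 1 + off D *v 1)"
  shows "D' = mat 1 - Lam ** (mat 1 - D)"
proof -
  have "D' $ i $ j = (mat 1 - Lam ** (mat 1 - D)) $ i $ j" for i j
  proof (cases "i = j")
    case True
    have "(B *v 1) $ i + (off D *v 1) $ i = 1 - D $ i $ i"
      using row off_mulv_one_nth[of D i] by (simp add: hcat_ones_def vec_eq_iff)
    then have "D' $ i $ i = 1 - Lam $ i $ i * (1 - D $ i $ i)"
      using arg_cong[where f = "\<lambda>v. v $ i", OF D'_diag]
      by (simp add: diagv_def diagonal_matrix_vector_mult_nth[OF Lam_diag])
    then show ?thesis
      using True by (simp add: diagonal_matrix_mult_nth[OF Lam_diag] mat_def)
  next
    case False
    have "D' $ i $ j = off D' $ i $ j"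
      using False by (simp add: off_def)
    also have "\<dots> = Lam $ i $ i * D $ i $ j"
      by (simp only: D'_off diagonal_matrix_mult_nth[OF Lam_diag]) (simp add: off_def False)
    finally show ?thesis
      using False by (simp add: diagonal_matrix_mult_nth[OF Lam_diag] mat_def)
  qed
  then show ?thesis by (simp add: vec_eq_iff)
qed

lemma nonneg_mat_diagonal_mult:
  fixes Lam :: "real^'p^'p" and A :: "real^'n^'p"
  assumes "\<forall>i j. i \<noteq> j \<longrightarrow> Lam $ i $ j = 0" and "\<forall>i. 0 \<le> Lam $ i $ i" and "nonneg_mat A"
  shows "nonneg_mat (Lam ** A)"
  using assms by (simp add: nonneg_mat_def diagonal_matrix_mult_nth)

lemma nonneg_mat_iff_diagv_off:
  fixes D :: "real^'n^'n"
  shows "nonneg_mat D \<longleftrightarrow> nonneg_vec (diagv D) \<and> nonneg_mat (off D)"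
  unfolding nonneg_mat_def nonneg_vec_def diagv_def off_def by auto metis

theorem lemma1:
  fixes Y :: "real^'q^'p" and Z :: "real^'q^'s"
    and B :: "real^'s^'p" and D :: "real^'p^'p"
    and Lam :: "real^'p^'p"
    and B' :: "real^'s^'p" and D' :: "real^'p^'p"
  assumes eq: "(mat 1 - D) ** Y = B ** Z"
    and row: "hcat_ones B D = 1"
    and Bnn: "nonneg_mat B" and Dnn: "nonneg_mat D"
    and Lam_diag: "\<forall>i j. i \<noteq> j \<longrightarrow> Lam $ i $ j = 0"
    and Lam_nn: "\<forall>i. 0 \<le> Lam $ i $ i"
    and B'_def: "B' = Lam ** B"
    and D'_off: "off D' = Lam ** off D"
    and D'_diag: "diagv D' = 1 - Lam *v (B *v 1 + off D *v 1)"
    and D'_diag_nn: "nonneg_vec (diagv D')"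
  shows "(mat 1 - D') ** Y = B' ** Z \<and> hcat_ones B' D' = 1
         \<and> nonneg_mat B' \<and> nonneg_mat D'"
proof -
  have D'_eq: "D' = mat 1 - Lam ** (mat 1 - D)"
    using rescaled_D_eq_mat_one_minus[OF row Lam_diag D'_off D'_diag] .
  have "(mat 1 - D') ** Y = Lam ** ((mat 1 - D) ** Y)"
    by (simp add: D'_eq matrix_mul_assoc)
  then have "(mat 1 - D') ** Y = B' ** Z"
    by (simp add: eq B'_def matrix_mul_assoc)
  moreover have "hcat_ones B' D' = 1"
    using hcat_ones_rescaled[of Lam B D] by (simp add: B'_def D'_eq row)
  moreover have "nonneg_mat B'"
    using nonneg_mat_diagonal_mult[OF Lam_diag Lam_nn Bnn] by (simp add: B'_def)
  moreover have "nonneg_mat (off D')"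
    unfolding D'_off
    using nonneg_mat_diagonal_mult[OF Lam_diag Lam_nn] Dnn nonneg_mat_iff_diagv_off by blast
  then have "nonneg_mat D'"
    using D'_diag_nn nonneg_mat_iff_diagv_off by blast
  ultimately show ?thesis by blast
qed

end
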